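(* Let $\Delta t,\Delta h>0$ satisfy $1-\frac{m\,\Delta t}{\Delta h}\log(1/\epsilon)\ge0$. Define, for real numbers $V_0,V_1,\dots,V_m$, $$G(V_0,V_1,\dots,V_m)=V_0-\Delta t\,\tilde H\Big(\Big(\tfrac{V_j-V_0}{\Delta h}\Big)_{j\in[m]}\Big).$$ Then $G$ is non-decreasing in each of its arguments $V_0,V_1,\dots,V_m$. (Consequently the scheme $V^{n+1}_{\mathbf i}=V^n_{\mathbf i}-\Delta t\,\tilde H\big(((V^n_{\mathbf i+e_j}-V^n_{\mathbf i})/\Delta h)_{j\in[m]}\big)$ on a grid of multi-indices $\mathbf i\in\mathbb Z^m$ is monotone.)
   Context: $\mathcal X$ finite, $\Delta_{\mathcal X}$ the distributions on $\mathcal X$, $\Delta_K$ the simplex on $[K]$, $D$ the KL divergence; $m\ge2$ bandits $\nu^1,\dots,\nu^m$, $\nu^i=(\nu^i_a)_{a\in[K]}$, with $\nu^i_a(x)\ge\epsilon$ for all $i,a,x$, $\epsilon\in(0,1)$. $H(p)=\min_{Q\in(\Delta_{\mathcal X})^K}\max_{w\in\Delta_K}\sum_{i=1}^m\sum_aw(a)D(Q_a\|\nu^i_a)p_i$ for $p\in\mathbb R^m$, and $\tilde H(p)=-H(p)$ (the Hamiltonian of the time-reversed equation). $e_j$ denotes the $j$-th unit multi-index. *)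

theory Defs
  imports "HOL-Analysis.Analysis"
begin

definition distr :: "('x::finite \<Rightarrow> real) set" where
  "distr = {q. (\<forall>x. 0 \<le> q x) \<and> (\<Sum>x\<in>UNIV. q x) = 1}"

definition KL :: "('x::finite \<Rightarrow> real) \<Rightarrow> ('x \<Rightarrow> real) \<Rightarrow> real" where
  "KL q r = (\<Sum>x\<in>UNIV. if q x = 0 then 0 else q x * ln (q x / r x))"

text \<open>Bandits are indexed 0..m-1,
  arms by the finite type 'a, outcomes by the finite type 'x.\<close>
definition Ham :: "nat \<Rightarrow> (nat \<Rightarrow> 'a::finite \<Rightarrow> 'x::finite \<Rightarrow> real) \<Rightarrow> (nat \<Rightarrow> real) \<Rightarrow> real" where
  "Ham m \<nu> p = (INF Q \<in> {Q :: 'a \<Rightarrow> 'x \<Rightarrow> real. \<forall>a. Q a \<in> distr}.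
      SUP w \<in> (distr :: ('a \<Rightarrow> real) set).
        (\<Sum>i<m. \<Sum>a\<in>UNIV. w a * KL (Q a) (\<nu> i a) * p i))"

definition Ham_tilde :: "nat \<Rightarrow> (nat \<Rightarrow> 'a::finite \<Rightarrow> 'x::finite \<Rightarrow> real) \<Rightarrow> (nat \<Rightarrow> real) \<Rightarrow> real" where
  "Ham_tilde m \<nu> p = - Ham m \<nu> p"

text \<open>The scheme map G(V_0, V_1..V_m); V j for j<m stands for V_{j+1}.\<close>
definition Gmap :: "real \<Rightarrow> real \<Rightarrow> nat \<Rightarrow> (nat \<Rightarrow> 'a::finite \<Rightarrow> 'x::finite \<Rightarrow> real)
    \<Rightarrow> real \<Rightarrow> (nat \<Rightarrow> real) \<Rightarrow> real" where
  "Gmap dt dh m \<nu> V0 V = V0 - dt * Ham_tilde m \<nu> (\<lambda>j. (V j - V0) / dh)"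

end

theory Submission
  imports Defs
begin

text \<open>Every KL divergence appearing in the Hamiltonian lies in \<open>[0, ln (1/\<epsilon>)]\<close>, hence so does
  the coefficient \<open>\<Sum>\<^sub>a w a * KL (Q a) (\<nu> i a)\<close> of each \<open>p i\<close>. Consequently \<open>H\<close> is monotone,
  and raising all entries of \<open>p\<close> by \<open>d \<ge> 0\<close> raises \<open>H\<close> by at most \<open>m d ln (1/\<epsilon>)\<close>.
  The first fact makes \<open>G\<close> monotone in \<open>V\<^sub>1, \<dots>, V\<^sub>m\<close>. Raising \<open>V\<^sub>0\<close> by \<open>\<delta>\<close> lowers every
  difference quotient by \<open>\<delta>/\<Delta>h\<close>, so \<open>\<Delta>t H\<close> drops by at most \<open>\<delta> m \<Delta>t ln (1/\<epsilon>) / \<Delta>h \<le> \<delta>\<close>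
  by the CFL condition, and \<open>G\<close> does not decrease.\<close>

lemma INF_SUP_le_add:
  fixes g1 g2 :: "'q \<Rightarrow> 'w \<Rightarrow> real"
  assumes S: "S \<noteq> {}" and W: "W \<noteq> {}"
    and bound1: "\<And>Q w. Q \<in> S \<Longrightarrow> w \<in> W \<Longrightarrow> \<bar>g1 Q w\<bar> \<le> B"
    and bound2: "\<And>Q w. Q \<in> S \<Longrightarrow> w \<in> W \<Longrightarrow> \<bar>g2 Q w\<bar> \<le> B"
    and le: "\<And>Q w. Q \<in> S \<Longrightarrow> w \<in> W \<Longrightarrow> g1 Q w \<le> g2 Q w + c"
  shows "(INF Q\<in>S. SUP w\<in>W. g1 Q w) \<le> (INF Q\<in>S. SUP w\<in>W. g2 Q w) + c"
proof -
  have bdd1: "bdd_above (g1 Q ` W)" and bdd2: "bdd_above (g2 Q ` W)" if "Q \<in> S" for Q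
    using bound1[OF that] bound2[OF that] by (auto intro!: bdd_aboveI[where M=B] simp: abs_le_iff)
  obtain w0 where w0: "w0 \<in> W" using W by auto
  have SUP_le: "(SUP w\<in>W. g1 Q w) \<le> (SUP w\<in>W. g2 Q w) + c" if Q: "Q \<in> S" for Q
  proof (rule cSUP_least[OF W])
    fix w assume w: "w \<in> W"
    show "g1 Q w \<le> (SUP w\<in>W. g2 Q w) + c"
      using le[OF Q w] cSUP_upper[OF w bdd2[OF Q]] by linarith
  qed
  have "-B \<le> (SUP w\<in>W. g1 Q w)" if Q: "Q \<in> S" for Q
    using bound1[OF Q w0] cSUP_upper[OF w0 bdd1[OF Q]] by (simp add: abs_le_iff)
  then have bdd_below: "bdd_below ((\<lambda>Q. SUP w\<in>W. g1 Q w) ` S)"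
    by (auto intro!: bdd_belowI[where m="-B"])
  have "(INF Q\<in>S. SUP w\<in>W. g1 Q w) - c \<le> (INF Q\<in>S. SUP w\<in>W. g2 Q w)"
  proof (rule cINF_greatest[OF S])
    fix Q assume Q: "Q \<in> S"
    show "(INF Q\<in>S. SUP w\<in>W. g1 Q w) - c \<le> (SUP w\<in>W. g2 Q w)"
      using cINF_lower[OF bdd_below Q] SUP_le[OF Q] by linarith
  qed
  then show ?thesis by linarith
qed

lemma distr_nonempty: "(distr :: ('x::finite \<Rightarrow> real) set) \<noteq> {}"
proof -
  have "(\<lambda>_::'x. 1 / real CARD('x)) \<in> distr"
    by (simp add: distr_def)
  then show ?thesis by auto
qed

lemma distr_le_1:
  assumes "q \<in> (distr :: ('x::finite \<Rightarrow> real) set)"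
  shows "q x \<le> 1"
proof -
  have "q x \<le> (\<Sum>y\<in>UNIV. q y)"
    using assms by (intro member_le_sum) (auto simp: distr_def)
  then show ?thesis using assms by (simp add: distr_def)
qed

lemma KL_nonneg:
  assumes q: "q \<in> (distr :: ('x::finite \<Rightarrow> real) set)" and r: "r \<in> distr"
    and r_pos: "\<And>x. r x > 0"
  shows "0 \<le> KL q r"
proof -
  have q_nonneg: "\<And>x. 0 \<le> q x" using q by (auto simp: distr_def)
  have term_ge: "q x - r x \<le> (if q x = 0 then 0 else q x * ln (q x / r x))" for x
  proof (cases "q x = 0")
    case True then show ?thesis using r_pos[of x] by simp
  next
    case False
    then have qx: "q x > 0" using q_nonneg[of x] by simp
    have "ln (r x / q x) \<le> r x / q x - 1"
      using qx r_pos[of x] by (intro ln_le_minus_one) simp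
    moreover have "ln (q x / r x) = - ln (r x / q x)"
      using qx r_pos[of x] by (simp add: ln_div)
    ultimately have "q x * (1 - r x / q x) \<le> q x * ln (q x / r x)"
      using qx by (intro mult_left_mono) auto
    moreover have "q x * (1 - r x / q x) = q x - r x" using qx by (simp add: field_simps)
    ultimately show ?thesis using False by simp
  qed
  have "(\<Sum>x\<in>UNIV. q x - r x) \<le> KL q r"
    unfolding KL_def by (rule sum_mono) (rule term_ge)
  then show ?thesis using q r by (simp add: distr_def sum_subtractf)
qed

lemma KL_le_ln_inverse_lower_bound:
  assumes q: "q \<in> (distr :: ('x::finite \<Rightarrow> real) set)"
    and eps: "0 < \<epsilon>" and r_ge: "\<And>x. r x \<ge> \<epsilon>"
  shows "KL q r \<le> ln (1 / \<epsilon>)"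
proof -
  have term_le: "(if q x = 0 then 0 else q x * ln (q x / r x)) \<le> q x * ln (1 / \<epsilon>)" for x
  proof (cases "q x = 0")
    case True then show ?thesis by simp
  next
    case False
    then have qx: "q x > 0" using q by (auto simp: distr_def order_le_less)
    have rx: "r x > 0" using r_ge[of x] eps by linarith
    have "q x / r x \<le> 1 / r x"
      using distr_le_1[OF q, of x] rx by (simp add: divide_right_mono)
    also have "\<dots> \<le> 1 / \<epsilon>" using r_ge[of x] eps by (simp add: frac_le)
    finally have "ln (q x / r x) \<le> ln (1 / \<epsilon>)"
      using qx rx eps by (subst ln_le_cancel_iff) auto
    then show ?thesis using False qx by (simp add: mult_left_mono)
  qed
  have "KL q r \<le> (\<Sum>x\<in>UNIV. q x * ln (1 / \<epsilon>))"
    unfolding KL_def by (rule sum_mono) (rule term_le)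
  also have "\<dots> = ln (1 / \<epsilon>)" using q by (simp add: distr_def sum_distrib_right[symmetric])
  finally show ?thesis .
qed

lemma mixed_KL_bounds:
  fixes r :: "'a::finite \<Rightarrow> 'x::finite \<Rightarrow> real"
  assumes Q: "\<And>a. Q a \<in> distr" and w: "w \<in> distr"
    and r: "\<And>a. r a \<in> distr" and eps: "0 < \<epsilon>" and r_ge: "\<And>a x. r a x \<ge> \<epsilon>"
  shows "0 \<le> (\<Sum>a\<in>UNIV. w a * KL (Q a) (r a))"
    and "(\<Sum>a\<in>UNIV. w a * KL (Q a) (r a)) \<le> ln (1 / \<epsilon>)"
proof -
  have w_nonneg: "\<And>a. 0 \<le> w a" using w by (auto simp: distr_def)
  have "0 < r a x" for a x using r_ge[of a x] eps by linarith
  then have "0 \<le> KL (Q a) (r a)" for a using KL_nonneg Q r by blast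
  then show "0 \<le> (\<Sum>a\<in>UNIV. w a * KL (Q a) (r a))"
    using w_nonneg by (intro sum_nonneg) simp
  have "(\<Sum>a\<in>UNIV. w a * KL (Q a) (r a)) \<le> (\<Sum>a\<in>UNIV. w a * ln (1 / \<epsilon>))"
    using KL_le_ln_inverse_lower_bound[OF Q eps r_ge] w_nonneg
    by (intro sum_mono mult_left_mono) auto
  also have "\<dots> = ln (1 / \<epsilon>)" using w by (simp add: distr_def sum_distrib_right[symmetric])
  finally show "(\<Sum>a\<in>UNIV. w a * KL (Q a) (r a)) \<le> ln (1 / \<epsilon>)" .
qed

lemma Ham_le_add_shift:
  fixes \<nu> :: "nat \<Rightarrow> 'a::finite \<Rightarrow> 'x::finite \<Rightarrow> real"
  assumes eps: "0 < \<epsilon>"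
    and nu_distr: "\<And>i a. i < m \<Longrightarrow> \<nu> i a \<in> distr"
    and nu_ge: "\<And>i a x. i < m \<Longrightarrow> \<nu> i a x \<ge> \<epsilon>"
    and p_le: "\<And>i. i < m \<Longrightarrow> p i \<le> p' i + d"
    and d: "0 \<le> d"
  shows "Ham m \<nu> p \<le> Ham m \<nu> p' + d * (real m * ln (1 / \<epsilon>))"
proof -
  define L where "L = ln (1 / \<epsilon>)"
  define S where "S = {Q :: 'a \<Rightarrow> 'x \<Rightarrow> real. \<forall>a. Q a \<in> distr}"
  define k where "k Q w i = (\<Sum>a\<in>UNIV. w a * KL (Q a) (\<nu> i a))"
    for Q :: "'a \<Rightarrow> 'x \<Rightarrow> real" and w :: "'a \<Rightarrow> real" and i
  have k: "0 \<le> k Q w i" "k Q w i \<le> L" if "Q \<in> S" "w \<in> distr" "i < m" for Q w i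
    using mixed_KL_bounds[of Q w "\<nu> i" \<epsilon>] that nu_distr nu_ge eps
    unfolding k_def L_def S_def by auto
  define B where "B = (\<Sum>i<m. L * (\<bar>p i\<bar> + \<bar>p' i\<bar>))"
  have bound: "\<bar>\<Sum>i<m. k Q w i * q i\<bar> \<le> B"
    if "Q \<in> S" "w \<in> distr" "\<And>i. \<bar>q i\<bar> \<le> \<bar>p i\<bar> + \<bar>p' i\<bar>" for Q w q
  proof -
    have "\<bar>\<Sum>i<m. k Q w i * q i\<bar> \<le> (\<Sum>i<m. \<bar>k Q w i\<bar> * \<bar>q i\<bar>)"
      unfolding abs_mult[symmetric] by (rule sum_abs)
    also have "\<dots> \<le> B"
      unfolding B_def using k[OF that(1,2)] that(3)
      by (intro sum_mono mult_mono) (auto intro: order_trans)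
    finally show ?thesis .
  qed
  have "(INF Q\<in>S. SUP w\<in>distr. \<Sum>i<m. k Q w i * p i)
      \<le> (INF Q\<in>S. SUP w\<in>distr. \<Sum>i<m. k Q w i * p' i) + d * (real m * L)"
  proof (rule INF_SUP_le_add)
    show "S \<noteq> {}" "(distr :: ('a \<Rightarrow> real) set) \<noteq> {}"
      unfolding S_def using distr_nonempty by auto
  next
    fix Q and w :: "'a \<Rightarrow> real" assume "Q \<in> S" "w \<in> distr"
    then show "\<bar>\<Sum>i<m. k Q w i * p i\<bar> \<le> B" "\<bar>\<Sum>i<m. k Q w i * p' i\<bar> \<le> B"
      by (auto intro!: bound)
  next
    fix Q and w :: "'a \<Rightarrow> real" assume Q: "Q \<in> S" and w: "w \<in> distr"
    have "k Q w i * p i \<le> k Q w i * p' i + d * L" if "i < m" for i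
    proof -
      have "k Q w i * p i \<le> k Q w i * p' i + k Q w i * d"
        using mult_left_mono[OF p_le[OF that] k(1)[OF Q w that]] by (simp add: distrib_left)
      also have "k Q w i * d \<le> d * L"
        using mult_left_mono[OF k(2)[OF Q w that] d] by (simp add: mult.commute)
      finally show ?thesis by simp
    qed
    then have "(\<Sum>i<m. k Q w i * p i) \<le> (\<Sum>i<m. k Q w i * p' i + d * L)"
      by (intro sum_mono) simp
    then show "(\<Sum>i<m. k Q w i * p i) \<le> (\<Sum>i<m. k Q w i * p' i) + d * (real m * L)"
      by (simp add: sum.distrib mult.left_commute)
  qed
  moreover have "(\<Sum>i<m. \<Sum>a\<in>UNIV. w a * KL (Q a) (\<nu> i a) * q i) = (\<Sum>i<m. k Q w i * q i)"
    for Q w q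
    unfolding k_def by (simp add: sum_distrib_right)
  ultimately show ?thesis unfolding Ham_def S_def L_def by simp
qed

lemma Gmap_mono_neighbour:
  fixes \<nu> :: "nat \<Rightarrow> 'a::finite \<Rightarrow> 'x::finite \<Rightarrow> real"
  assumes eps: "0 < \<epsilon>"
    and nu_distr: "\<And>i a. i < m \<Longrightarrow> \<nu> i a \<in> distr"
    and nu_ge: "\<And>i a x. i < m \<Longrightarrow> \<nu> i a x \<ge> \<epsilon>"
    and dt: "dt \<ge> 0" and dh: "dh > 0"
    and V_le: "\<And>i. i < m \<Longrightarrow> V i \<le> V' i"
  shows "Gmap dt dh m \<nu> V0 V \<le> Gmap dt dh m \<nu> V0 V'"
proof -
  have "Ham m \<nu> (\<lambda>i. (V i - V0) / dh) \<le> Ham m \<nu> (\<lambda>i. (V' i - V0) / dh) + 0 * (real m * ln (1 / \<epsilon>))"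
    using V_le dh by (intro Ham_le_add_shift[OF eps nu_distr nu_ge]) (auto simp: divide_right_mono)
  then show ?thesis
    unfolding Gmap_def Ham_tilde_def using dt by (simp add: mult_left_mono)
qed

lemma Gmap_mono_centre:
  fixes \<nu> :: "nat \<Rightarrow> 'a::finite \<Rightarrow> 'x::finite \<Rightarrow> real"
  assumes eps: "0 < \<epsilon>"
    and nu_distr: "\<And>i a. i < m \<Longrightarrow> \<nu> i a \<in> distr"
    and nu_ge: "\<And>i a x. i < m \<Longrightarrow> \<nu> i a x \<ge> \<epsilon>"
    and dt: "dt \<ge> 0" and dh: "dh > 0"
    and cfl: "real m * dt / dh * ln (1 / \<epsilon>) \<le> 1"
    and le: "V0 \<le> V0'"
  shows "Gmap dt dh m \<nu> V0 V \<le> Gmap dt dh m \<nu> V0' V"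
proof -
  define d where "d = (V0' - V0) / dh"
  have "0 \<le> d" using le dh by (simp add: d_def)
  then have "Ham m \<nu> (\<lambda>j. (V j - V0) / dh)
      \<le> Ham m \<nu> (\<lambda>j. (V j - V0') / dh) + d * (real m * ln (1 / \<epsilon>))"
    by (intro Ham_le_add_shift[OF eps nu_distr nu_ge]) (auto simp: d_def diff_divide_distrib)
  then have "dt * Ham m \<nu> (\<lambda>j. (V j - V0) / dh)
      \<le> dt * Ham m \<nu> (\<lambda>j. (V j - V0') / dh) + dt * (d * (real m * ln (1 / \<epsilon>)))"
    using mult_left_mono[OF _ dt] by (simp add: distrib_left[symmetric])
  moreover have "dt * (d * (real m * ln (1 / \<epsilon>))) = (V0' - V0) * (real m * dt / dh * ln (1 / \<epsilon>))"
    by (simp add: d_def)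
  moreover have "(V0' - V0) * (real m * dt / dh * ln (1 / \<epsilon>)) \<le> V0' - V0"
    using mult_left_mono[OF cfl] le by simp
  ultimately show ?thesis
    unfolding Gmap_def Ham_tilde_def by linarith
qed

theorem mainTheorem9:
  fixes \<nu> :: "nat \<Rightarrow> 'a::finite \<Rightarrow> 'x::finite \<Rightarrow> real"
    and m :: nat and \<epsilon> dt dh :: real
  assumes m2: "m \<ge> 2"
    and eps: "0 < \<epsilon>" "\<epsilon> < 1"
    and nu_distr: "\<And>i a. i < m \<Longrightarrow> \<nu> i a \<in> distr"
    and nu_lb: "\<And>i a x. i < m \<Longrightarrow> \<nu> i a x \<ge> \<epsilon>"
    and dt: "dt > 0" and dh: "dh > 0"
    and cfl: "1 - real m * dt / dh * ln (1 / \<epsilon>) \<ge> 0"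
  shows "(\<forall>V0 V0' V. V0 \<le> V0' \<longrightarrow> Gmap dt dh m \<nu> V0 V \<le> Gmap dt dh m \<nu> V0' V)
       \<and> (\<forall>j<m. \<forall>V0 V y. V j \<le> y \<longrightarrow> Gmap dt dh m \<nu> V0 V \<le> Gmap dt dh m \<nu> V0 (V(j := y)))"
proof (intro conjI allI impI)
  fix V0 V0' :: real and V :: "nat \<Rightarrow> real"
  assume "V0 \<le> V0'"
  moreover have "real m * dt / dh * ln (1 / \<epsilon>) \<le> 1" using cfl by simp
  ultimately show "Gmap dt dh m \<nu> V0 V \<le> Gmap dt dh m \<nu> V0' V"
    using Gmap_mono_centre[where \<nu>=\<nu> and m=m, OF eps(1) nu_distr nu_lb] dt dh by simp
next
  fix j V0 y and V :: "nat \<Rightarrow> real"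
  assume "j < m" and "V j \<le> y"
  then show "Gmap dt dh m \<nu> V0 V \<le> Gmap dt dh m \<nu> V0 (V(j := y))"
    by (intro Gmap_mono_neighbour[where \<nu>=\<nu> and m=m, OF eps(1) nu_distr nu_lb]) (use dt dh in auto)
qed

end
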